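(* Let $b_1,\dots,b_n\in\textsc{Xos}$ be valuations over $m$ items. Then for any partition $\mathbf{x}_1,\dots,\mathbf{x}_n\in\{0,1\}^m$ of the items (i.e. $\sum_i\mathbf{x}_i=\mathbf{1}$), $$\sum_i W^{\mathbf{b}_{-i}}(\mathbf{x}_i\mid\mathbf{1}-\mathbf{x}_i)\le 2\,W^{\mathbf{b}}(\mathbf{1}).$$
   Context: A valuation is $v:\{0,1\}^m\to\mathbb{R}_+$ with $v(\mathbf{0})=0$ and monotone; it is extended to $\mathbb{Z}^m_+$ by $v(\mathbf{x})=v(\min(\mathbf{x},\mathbf{1}))$. $v\in\textsc{Xos}$ if there is a set $I$ and vectors $\{\mathbf{w}_k\}_{k\in I}\subseteq\mathbb{R}^m_+$ with $v(\mathbf{x})=\max_{k\in I}\mathbf{w}_k\cdot\mathbf{x}$. For $\mathbf{x}\in\mathbb{Z}^m_+$: $W^{\mathbf{b}}(\mathbf{x})=\max\{\sum_k b_k(\mathbf{y}_k):\sum_k\mathbf{y}_k\le\mathbf{x},\mathbf{y}_k\in\{0,1\}^m\}$ and $W^{\mathbf{b}_{-i}}(\mathbf{x})=\max\{\sum_{k\ne i}b_k(\mathbf{y}_k):\sum_{k\ne i}\mathbf{y}_k\le\mathbf{x},\mathbf{y}_k\in\{0,1\}^m\}$. For a function $f$ on $\mathbb{Z}^m_+$, $f(\mathbf{y}\mid\mathbf{x})=f(\mathbf{y}+\mathbf{x})-f(\mathbf{x})$. *)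

theory Defs
  imports Complex_Main
begin

text \<open>Items are 0,...,m-1. A vector in Z^m_+ is a function nat => nat
  (only coordinates j < m matter); a vector in {0,1}^m is such a function
  with values at most 1 that vanishes outside the item range.\<close>

definition binvec :: "nat \<Rightarrow> (nat \<Rightarrow> nat) \<Rightarrow> bool" where
  "binvec m y \<longleftrightarrow> (\<forall>j. y j \<le> 1) \<and> (\<forall>j\<ge>m. y j = 0)"

definition onevec :: "nat \<Rightarrow> nat \<Rightarrow> nat" where
  "onevec m = (\<lambda>j. if j < m then 1 else 0)"

definition zerovec :: "nat \<Rightarrow> nat" where
  "zerovec = (\<lambda>j. 0)"

definition valuation :: "nat \<Rightarrow> ((nat \<Rightarrow> nat) \<Rightarrow> real) \<Rightarrow> bool" where
  "valuation m v \<longleftrightarrow> v zerovec = 0 \<and> (\<forall>x. binvec m x \<longrightarrow> v x \<ge> 0)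
     \<and> (\<forall>x y. binvec m x \<longrightarrow> binvec m y \<longrightarrow> (\<forall>j. x j \<le> y j) \<longrightarrow> v x \<le> v y)"

definition dotp :: "nat \<Rightarrow> (nat \<Rightarrow> real) \<Rightarrow> (nat \<Rightarrow> nat) \<Rightarrow> real" where
  "dotp m w x = (\<Sum>j<m. w j * real (x j))"

definition xos :: "nat \<Rightarrow> ((nat \<Rightarrow> nat) \<Rightarrow> real) \<Rightarrow> bool" where
  "xos m v \<longleftrightarrow> valuation m v \<and>
     (\<exists>WS :: (nat \<Rightarrow> real) set. (\<forall>w\<in>WS. \<forall>j. w j \<ge> 0) \<and>
        (\<forall>x. binvec m x \<longrightarrow> (\<exists>w\<in>WS. v x = dotp m w x) \<and> (\<forall>w\<in>WS. dotp m w x \<le> v x)))"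

definition Wel :: "nat \<Rightarrow> nat \<Rightarrow> (nat \<Rightarrow> (nat \<Rightarrow> nat) \<Rightarrow> real) \<Rightarrow> (nat \<Rightarrow> nat) \<Rightarrow> real" where
  "Wel m n b x = Max {(\<Sum>k<n. b k (y k)) | y.
       (\<forall>k<n. binvec m (y k)) \<and> (\<forall>j<m. (\<Sum>k<n. y k j) \<le> x j)}"

definition Wel_minus :: "nat \<Rightarrow> nat \<Rightarrow> (nat \<Rightarrow> (nat \<Rightarrow> nat) \<Rightarrow> real) \<Rightarrow> nat \<Rightarrow> (nat \<Rightarrow> nat) \<Rightarrow> real" where
  "Wel_minus m n b i x = Max {(\<Sum>k\<in>{..<n} - {i}. b k (y k)) | y.
       (\<forall>k\<in>{..<n} - {i}. binvec m (y k)) \<and> (\<forall>j<m. (\<Sum>k\<in>{..<n} - {i}. y k j) \<le> x j)}"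

definition marg :: "((nat \<Rightarrow> nat) \<Rightarrow> real) \<Rightarrow> (nat \<Rightarrow> nat) \<Rightarrow> (nat \<Rightarrow> nat) \<Rightarrow> real" where
  "marg f y x = f (\<lambda>j. y j + x j) - f x"

end

theory Submission
  imports Defs "HOL-Library.FuncSet"
begin

text \<open>Fix an optimal allocation \<open>y\<close> of all items and, for every bidder \<open>k\<close>, an additive
  clause \<open>w k\<close> of the XOS valuation \<open>b k\<close> that is tight at \<open>y k\<close>. Dropping bidder \<open>i\<close>
  cannot raise welfare, while giving each other bidder \<open>k\<close> its bundle \<open>y k\<close> without the
  items of \<open>x i\<close> loses at most \<open>w k \<cdot> (x i \<and> y k)\<close>. Hence the marginal of \<open>x i\<close> is at
  most \<open>b i (y i) + \<Sum>k. w k \<cdot> (x i \<and> y k)\<close>; as the \<open>x i\<close> partition the items, summing over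
  \<open>i\<close> gives \<open>W + \<Sum>k. w k \<cdot> y k = 2 W\<close>, where \<open>W\<close> is the optimal welfare.\<close>

definition welfare :: "nat \<Rightarrow> nat set \<Rightarrow> (nat \<Rightarrow> (nat \<Rightarrow> nat) \<Rightarrow> real) \<Rightarrow> (nat \<Rightarrow> nat) \<Rightarrow> real" where
  "welfare m K b s = Max {(\<Sum>k\<in>K. b k (y k)) | y.
       (\<forall>k\<in>K. binvec m (y k)) \<and> (\<forall>j<m. (\<Sum>k\<in>K. y k j) \<le> s j)}"

lemma Wel_eq_welfare: "Wel m n b = welfare m {..<n} b"
  by (simp add: fun_eq_iff Wel_def welfare_def Ball_def)

lemma Wel_minus_eq_welfare: "Wel_minus m n b i = welfare m ({..<n} - {i}) b"
  by (simp add: fun_eq_iff Wel_minus_def welfare_def)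

lemma binvec_zerovec: "binvec m zerovec"
  by (simp add: binvec_def zerovec_def)

lemma binvec_le_onevec: "binvec m y \<Longrightarrow> y j \<le> onevec m j"
  by (auto simp: binvec_def onevec_def)

lemma finite_binvec: "finite {y. binvec m y}"
proof (rule finite_subset)
  show "{y. binvec m y} \<subseteq> (\<lambda>S j. if j \<in> S then 1 else 0) ` Pow {..<m}"
  proof
    fix y assume "y \<in> {y. binvec m y}"
    then have y: "binvec m y" by simp
    then have "y = (\<lambda>j. if j \<in> {j. y j = 1} then 1 else 0)"
      by (auto simp: fun_eq_iff binvec_def le_Suc_eq)
    moreover have "{j. y j = 1} \<in> Pow {..<m}"
      using y by (auto simp: binvec_def) (metis Suc_neq_Zero not_le)
    ultimately show "y \<in> (\<lambda>S j. if j \<in> S then 1 else 0) ` Pow {..<m}" by blast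
  qed
qed simp

lemma finite_allocation_values:
  assumes "finite K"
  shows "finite {(\<Sum>k\<in>K. b k (y k)) | y. (\<forall>k\<in>K. binvec m (y k)) \<and> P y}"
proof (rule finite_subset)
  show "{(\<Sum>k\<in>K. b k (y k)) | y. (\<forall>k\<in>K. binvec m (y k)) \<and> P y}
        \<subseteq> (\<lambda>y. \<Sum>k\<in>K. b k (y k)) ` (K \<rightarrow>\<^sub>E {y. binvec m y})"
  proof clarify
    fix y assume "\<forall>k\<in>K. binvec m (y k)"
    then have "restrict y K \<in> K \<rightarrow>\<^sub>E {y. binvec m y}" by auto
    moreover have "(\<Sum>k\<in>K. b k (y k)) = (\<Sum>k\<in>K. b k (restrict y K k))" by simp
    ultimately show "(\<Sum>k\<in>K. b k (y k)) \<in> (\<lambda>y. \<Sum>k\<in>K. b k (y k)) ` (K \<rightarrow>\<^sub>E {y. binvec m y})"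
      by blast
  qed
  show "finite ((\<lambda>y. \<Sum>k\<in>K. b k (y k)) ` (K \<rightarrow>\<^sub>E {y. binvec m y}))"
    using assms finite_binvec by (intro finite_imageI finite_PiE)
qed

lemma welfare_ge:
  assumes "finite K" "\<forall>k\<in>K. binvec m (y k)" "\<forall>j<m. (\<Sum>k\<in>K. y k j) \<le> s j"
  shows "(\<Sum>k\<in>K. b k (y k)) \<le> welfare m K b s"
  unfolding welfare_def using assms by (intro Max_ge finite_allocation_values) auto

lemma welfare_attained:
  assumes "finite K"
  obtains y where "\<forall>k\<in>K. binvec m (y k)" "\<forall>j<m. (\<Sum>k\<in>K. y k j) \<le> s j"
    "welfare m K b s = (\<Sum>k\<in>K. b k (y k))"
proof -
  let ?V = "{(\<Sum>k\<in>K. b k (y k)) | y. (\<forall>k\<in>K. binvec m (y k)) \<and> (\<forall>j<m. (\<Sum>k\<in>K. y k j) \<le> s j)}"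
  have "(\<Sum>k\<in>K. b k zerovec) \<in> ?V"
    using binvec_zerovec by (auto simp: zerovec_def)
  then have "welfare m K b s \<in> ?V"
    unfolding welfare_def using assms by (intro Max_in finite_allocation_values) auto
  then show thesis using that by blast
qed

lemma welfare_mono_bidders:
  assumes "finite K" "L \<subseteq> K" "\<forall>k\<in>K - L. b k zerovec = 0"
  shows "welfare m L b s \<le> welfare m K b s"
proof -
  have "finite L" using assms(1,2) by (rule finite_subset[rotated])
  then obtain y where y: "\<forall>k\<in>L. binvec m (y k)" "\<forall>j<m. (\<Sum>k\<in>L. y k j) \<le> s j"
    and opt: "welfare m L b s = (\<Sum>k\<in>L. b k (y k))"
    by (rule welfare_attained)
  define y' where "y' k = (if k \<in> L then y k else zerovec)" for k
  have split: "(\<Sum>k\<in>K. f (y' k) k) = (\<Sum>k\<in>L. f (y k) k) + (\<Sum>k\<in>K - L. f zerovec k)"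
    for f :: "(nat \<Rightarrow> nat) \<Rightarrow> nat \<Rightarrow> 'a::comm_monoid_add"
    using assms(1,2) by (simp add: y'_def sum.subset_diff[of L K] add.commute)
  have "(\<Sum>k\<in>K. b k (y' k)) \<le> welfare m K b s"
  proof (rule welfare_ge[OF assms(1)])
    show "\<forall>k\<in>K. binvec m (y' k)" using y(1) binvec_zerovec by (simp add: y'_def)
    show "\<forall>j<m. (\<Sum>k\<in>K. y' k j) \<le> s j"
      using y(2) split[of "\<lambda>z k. z j" for j] by (simp add: zerovec_def)
  qed
  then show ?thesis
    using opt split[of "\<lambda>z k. b k z"] assms(3) by simp
qed

definition supports :: "nat \<Rightarrow> (nat \<Rightarrow> real) \<Rightarrow> ((nat \<Rightarrow> nat) \<Rightarrow> real) \<Rightarrow> (nat \<Rightarrow> nat) \<Rightarrow> bool" where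
  "supports m w v y \<longleftrightarrow> (\<forall>j. 0 \<le> w j) \<and> v y = dotp m w y \<and> (\<forall>z. binvec m z \<longrightarrow> dotp m w z \<le> v z)"

lemma xos_supports:
  assumes "xos m v" "binvec m y"
  obtains w where "supports m w v y"
proof -
  obtain WS :: "(nat \<Rightarrow> real) set" where WS: "\<forall>w\<in>WS. \<forall>j. 0 \<le> w j"
    "\<forall>z. binvec m z \<longrightarrow> (\<exists>w\<in>WS. v z = dotp m w z) \<and> (\<forall>w\<in>WS. dotp m w z \<le> v z)"
    using assms(1) unfolding xos_def by blast
  then obtain w where "w \<in> WS" "v y = dotp m w y" using assms(2) by blast
  with WS have "supports m w v y" by (auto simp: supports_def)
  then show thesis by (rule that)
qed

lemma dotp_add: "dotp m w (\<lambda>j. u j + z j) = dotp m w u + dotp m w z"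
  by (simp add: dotp_def sum.distrib distrib_left)

lemma dotp_nonneg: "\<forall>j. 0 \<le> w j \<Longrightarrow> 0 \<le> dotp m w u"
  by (simp add: dotp_def sum_nonneg)

lemma dotp_sum_partition:
  assumes "\<forall>j<m. (\<Sum>i\<in>I. x i j) = 1"
  shows "(\<Sum>i\<in>I. dotp m w (\<lambda>j. x i j * y j)) = dotp m w y"
proof -
  have "(\<Sum>i\<in>I. dotp m w (\<lambda>j. x i j * y j)) = (\<Sum>j<m. w j * real ((\<Sum>i\<in>I. x i j) * y j))"
    unfolding dotp_def by (subst sum.swap) (simp add: sum_distrib_left sum_distrib_right)
  also have "\<dots> = dotp m w y"
    using assms by (simp add: dotp_def)
  finally show ?thesis .
qed

lemma binvec_restrict: "binvec m y \<Longrightarrow> binvec m (\<lambda>j. (1 - x j) * y j)"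
  unfolding binvec_def by (metis diff_le_self le_trans mult_le_mono1 mult_1 mult_0_right)

lemma supports_restrict_ge:
  assumes "supports m w v y" "binvec m y" "\<forall>j. x j \<le> 1"
  shows "v y - dotp m w (\<lambda>j. x j * y j) \<le> v (\<lambda>j. (1 - x j) * y j)"
proof -
  have "y = (\<lambda>j. (1 - x j) * y j + x j * y j)"
  proof
    fix j
    show "y j = (1 - x j) * y j + x j * y j" using assms(3)[rule_format, of j] by (cases "x j") auto
  qed
  then have "dotp m w y = dotp m w (\<lambda>j. (1 - x j) * y j) + dotp m w (\<lambda>j. x j * y j)"
    by (metis dotp_add)
  then show ?thesis
    using assms(1) binvec_restrict[OF assms(2)] by (auto simp: supports_def)
qed

lemma welfare_restrict_ge:
  assumes "finite K" "\<forall>j. x j \<le> 1"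
    and "\<forall>k\<in>K. binvec m (y k)" "\<forall>j<m. (\<Sum>k\<in>K. y k j) \<le> s j"
    and "\<forall>k\<in>K. supports m (w k) (b k) (y k)"
  shows "(\<Sum>k\<in>K. b k (y k) - dotp m (w k) (\<lambda>j. x j * y k j)) \<le> welfare m K b (\<lambda>j. s j - x j)"
proof -
  have "(\<Sum>k\<in>K. b k (y k) - dotp m (w k) (\<lambda>j. x j * y k j)) \<le> (\<Sum>k\<in>K. b k (\<lambda>j. (1 - x j) * y k j))"
    using assms(2,3,5) by (intro sum_mono supports_restrict_ge) auto
  also have "\<dots> \<le> welfare m K b (\<lambda>j. s j - x j)"
  proof (rule welfare_ge[OF assms(1)])
    show "\<forall>k\<in>K. binvec m (\<lambda>j. (1 - x j) * y k j)" using assms(3) binvec_restrict by blast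
    show "\<forall>j<m. (\<Sum>k\<in>K. (1 - x j) * y k j) \<le> s j - x j"
    proof (intro allI impI)
      fix j assume "j < m"
      then have "(\<Sum>k\<in>K. (1 - x j) * y k j) \<le> (1 - x j) * s j"
        using assms(4) by (simp add: sum_distrib_left[symmetric])
      also have "\<dots> \<le> s j - x j" using assms(2)[rule_format, of j] by (cases "x j") auto
      finally show "(\<Sum>k\<in>K. (1 - x j) * y k j) \<le> s j - x j" .
    qed
  qed
  finally show ?thesis .
qed

lemma marginal_welfare_le:
  assumes "finite K" "i \<in> K" "binvec m x"
    and "\<forall>k\<in>K. binvec m (y k)" "\<forall>j<m. (\<Sum>k\<in>K. y k j) \<le> onevec m j"
    and opt: "welfare m K b (onevec m) = (\<Sum>k\<in>K. b k (y k))"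
    and "\<forall>k\<in>K. supports m (w k) (b k) (y k)" "b i zerovec = 0"
  shows "marg (welfare m (K - {i}) b) x (\<lambda>j. onevec m j - x j)
           \<le> b i (y i) + (\<Sum>k\<in>K. dotp m (w k) (\<lambda>j. x j * y k j))"
proof -
  let ?loss = "\<lambda>k. dotp m (w k) (\<lambda>j. x j * y k j)"
  have "(\<lambda>j. x j + (onevec m j - x j)) = onevec m"
    using binvec_le_onevec[OF assms(3)] by (simp add: fun_eq_iff)
  moreover have "welfare m (K - {i}) b (onevec m) \<le> b i (y i) + (\<Sum>k\<in>K - {i}. b k (y k))"
    using welfare_mono_bidders[of K "K - {i}" b m "onevec m"] assms(1,2,8) opt
    by (simp add: sum.remove Diff_Diff_Int)
  moreover have "(\<Sum>k\<in>K - {i}. b k (y k) - ?loss k) \<le> welfare m (K - {i}) b (\<lambda>j. onevec m j - x j)"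
  proof (rule welfare_restrict_ge)
    show "\<forall>j<m. (\<Sum>k\<in>K - {i}. y k j) \<le> onevec m j"
      using assms(1,5) by (meson Diff_subset order_trans sum_mono2 zero_le)
  qed (use assms(1,3,4,7) in \<open>auto simp: binvec_def\<close>)
  moreover have "(\<Sum>k\<in>K - {i}. ?loss k) \<le> (\<Sum>k\<in>K. ?loss k)"
    using assms(1,7) by (intro sum_mono2) (auto simp: supports_def dotp_nonneg)
  ultimately show ?thesis
    unfolding marg_def by (simp add: sum_subtractf)
qed

theorem lemma3:
  fixes m n :: nat
    and b :: "nat \<Rightarrow> (nat \<Rightarrow> nat) \<Rightarrow> real"
    and x :: "nat \<Rightarrow> nat \<Rightarrow> nat"
  assumes "\<forall>k<n. xos m (b k)"
    and "\<forall>i<n. binvec m (x i)"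
    and "\<forall>j<m. (\<Sum>i<n. x i j) = 1"
  shows "(\<Sum>i<n. marg (Wel_minus m n b i) (x i) (\<lambda>j. onevec m j - x i j))
           \<le> 2 * Wel m n b (onevec m)"
proof -
  obtain y where y: "\<forall>k\<in>{..<n}. binvec m (y k)" "\<forall>j<m. (\<Sum>k<n. y k j) \<le> onevec m j"
    and opt: "welfare m {..<n} b (onevec m) = (\<Sum>k<n. b k (y k))"
    using welfare_attained[OF finite_lessThan] by blast
  have "\<forall>k\<in>{..<n}. \<exists>w. supports m w (b k) (y k)"
    using assms(1) y(1) by (metis lessThan_iff xos_supports)
  then obtain w where w: "\<forall>k\<in>{..<n}. supports m (w k) (b k) (y k)"
    by (metis bchoice)
  have "\<forall>k<n. b k zerovec = 0"
    using assms(1) by (simp add: xos_def valuation_def)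
  then have "(\<Sum>i<n. marg (Wel_minus m n b i) (x i) (\<lambda>j. onevec m j - x i j))
      \<le> (\<Sum>i<n. b i (y i) + (\<Sum>k<n. dotp m (w k) (\<lambda>j. x i j * y k j)))"
    unfolding Wel_minus_eq_welfare
    using assms(2) y opt w by (intro sum_mono marginal_welfare_le) auto
  also have "\<dots> = (\<Sum>i<n. b i (y i)) + (\<Sum>k<n. dotp m (w k) (y k))"
    using assms(3) by (simp add: sum.distrib sum.swap[of _ "{..<n}" "{..<n}"] dotp_sum_partition)
  also have "\<dots> = 2 * Wel m n b (onevec m)"
    using opt w by (simp add: Wel_eq_welfare supports_def)
  finally show ?thesis .
qed

end
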